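(* Let $r\ge1$ and let $\mathcal R_{2r\times 2r}$ be the grid graph with vertex set $\{0,1,\dots,2r-1\}^2\subset\mathbf{Z}^2$ and edges between vertices at Euclidean distance $1$. Let $s_i$ denote the edge between $(i,i)$ and $(i+1,i)$, for $i=0,1,\dots,r-1$ (the "step-diagonal" edges). If $G$ is obtained from $\mathcal R_{2r\times 2r}$ by deleting any $k$ of the edges $s_0,\dots,s_{r-1}$ (keeping all vertices), then $2^{r-k}$ divides $m_G$.
   Context: $m_G$ denotes the number of perfect matchings of the graph $G$. *)

theory Defs
  imports Complex_Main
begin

definition grid_vertices :: "nat \<Rightarrow> (nat \<times> nat) set" where
  "grid_vertices n = {0..<n} \<times> {0..<n}"

definition grid_edges :: "nat \<Rightarrow> (nat \<times> nat) set set" where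
  "grid_edges n = {{u, v} | u v. u \<in> grid_vertices n \<and> v \<in> grid_vertices n \<and>
      sqrt ((real (fst u) - real (fst v))^2 + (real (snd u) - real (snd v))^2) = 1}"

definition perfect_matching :: "'a set \<Rightarrow> 'a set set \<Rightarrow> 'a set set \<Rightarrow> bool" where
  "perfect_matching V E M \<longleftrightarrow> M \<subseteq> E \<and> (\<forall>v\<in>V. \<exists>!e. e \<in> M \<and> v \<in> e)"

definition num_perfect_matchings :: "'a set \<Rightarrow> 'a set set \<Rightarrow> nat" where
  "num_perfect_matchings V E = card {M. perfect_matching V E M}"

definition step_edge :: "nat \<Rightarrow> (nat \<times> nat) set" where
  "step_edge i = {(i, i), (i + 1, i)}"

end

theory Submission
  imports Defs
begin

text \<open>
  Fold the grid along its main diagonal. A perfect matching splits into its edges above and below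
  the diagonal; reflecting the lower ones yields a pair of matchings of the upper triangle which
  both cover every off-diagonal vertex, while every diagonal vertex is covered by exactly one of
  them. The first matching may use all upper-triangle edges, the second the reflections of the
  surviving lower edges, so the two edge sets differ only in the reflections of the deleted edges
  \<open>s\<^sub>j\<close>, each of which contains the diagonal vertex \<open>(j, j)\<close>.

  Such pairs are counted for an arbitrary finite graph: if \<open>D\<close> is the set of shared vertices and
  \<open>C \<subseteq> D\<close> meets every edge not available to both matchings, then \<open>2 ^ (card D div 2 - card C)\<close>
  divides their number. Classify the pairs by the edge \<open>{d, u}\<close> covering a shared vertex
  \<open>d \<notin> C\<close>. If \<open>u\<close> is not shared, deleting the edge from either matching makes \<open>u\<close> shared in
  place of \<open>d\<close>, and the two contributions add up to a single smaller instance. If \<open>u\<close> is shared,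
  deleting the edge removes \<open>d\<close> and \<open>u\<close> from \<open>D\<close>; when \<open>u \<notin> C\<close> the edge may lie in either
  matching, which supplies a factor 2, and when \<open>u \<in> C\<close> it leaves \<open>C\<close> as well.
\<close>

definition covered_once :: "'a set set \<Rightarrow> 'a \<Rightarrow> bool" where
  "covered_once M v \<longleftrightarrow> (\<exists>!e. e \<in> M \<and> v \<in> e)"

definition uncovered :: "'a set set \<Rightarrow> 'a \<Rightarrow> bool" where
  "uncovered M v \<longleftrightarrow> (\<forall>e\<in>M. v \<notin> e)"

lemma covered_once_insert_other [simp]:
  "v \<notin> e \<Longrightarrow> covered_once (insert e M) v \<longleftrightarrow> covered_once M v"
  unfolding covered_once_def by auto

lemma covered_once_Diff_other [simp]:
  "v \<notin> e \<Longrightarrow> covered_once (M - {e}) v \<longleftrightarrow> covered_once M v"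
  unfolding covered_once_def by auto

lemma uncovered_insert_other [simp]:
  "v \<notin> e \<Longrightarrow> uncovered (insert e M) v \<longleftrightarrow> uncovered M v"
  unfolding uncovered_def by auto

lemma uncovered_Diff_other [simp]:
  "v \<notin> e \<Longrightarrow> uncovered (M - {e}) v \<longleftrightarrow> uncovered M v"
  unfolding uncovered_def by auto

lemma covered_once_insert_uncovered:
  "v \<in> e \<Longrightarrow> uncovered M v \<Longrightarrow> covered_once (insert e M) v"
  unfolding covered_once_def uncovered_def by auto

lemma uncovered_Diff_covered_once:
  "covered_once M v \<Longrightarrow> e \<in> M \<Longrightarrow> v \<in> e \<Longrightarrow> uncovered (M - {e}) v"
  unfolding covered_once_def uncovered_def by auto

lemma covered_once_unique:
  "covered_once M v \<Longrightarrow> e \<in> M \<Longrightarrow> v \<in> e \<Longrightarrow> f \<in> M \<Longrightarrow> v \<in> f \<Longrightarrow> e = f"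
  unfolding covered_once_def by auto

lemma not_covered_once_and_uncovered: "covered_once M v \<Longrightarrow> uncovered M v \<Longrightarrow> False"
  unfolding covered_once_def uncovered_def by blast

lemma covered_onceE:
  assumes "covered_once M v"
  obtains e where "e \<in> M" "v \<in> e" "\<And>f. f \<in> M \<Longrightarrow> v \<in> f \<Longrightarrow> f = e"
  using assms unfolding covered_once_def by blast

lemma covered_once_filter_iff:
  "covered_once M v \<Longrightarrow> e \<in> M \<Longrightarrow> v \<in> e \<Longrightarrow> covered_once {f \<in> M. P f} v \<longleftrightarrow> P e"
  unfolding covered_once_def by blast

lemma uncovered_filter_iff:
  "covered_once M v \<Longrightarrow> e \<in> M \<Longrightarrow> v \<in> e \<Longrightarrow> uncovered {f \<in> M. P f} v \<longleftrightarrow> \<not> P e"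
  unfolding covered_once_def uncovered_def by blast

lemma covered_once_Un:
  "covered_once A v \<and> uncovered B v \<or> uncovered A v \<and> covered_once B v \<Longrightarrow> covered_once (A \<union> B) v"
  unfolding covered_once_def uncovered_def by blast

definition simple_graph :: "'a set \<Rightarrow> 'a set set \<Rightarrow> bool" where
  "simple_graph V E \<longleftrightarrow> (\<forall>e\<in>E. \<exists>x y. e = {x, y} \<and> x \<noteq> y \<and> x \<in> V \<and> y \<in> V)"

lemma finite_edges_if_simple_graph: "simple_graph V E \<Longrightarrow> finite V \<Longrightarrow> finite E"
  unfolding simple_graph_def by (rule finite_subset[of _ "Pow V"]) auto

lemma simple_graph_edge_through:
  assumes "simple_graph V E" "e \<in> E" "d \<in> e"
  obtains u where "e = {d, u}" "d \<noteq> u" "u \<in> V"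
  using assms unfolding simple_graph_def by (metis insert_commute insert_iff singletonD)

definition avoiding :: "'a set \<Rightarrow> 'a set set \<Rightarrow> 'a set set" where
  "avoiding W E = {e \<in> E. e \<inter> W = {}}"

lemma avoiding_subset: "avoiding W E \<subseteq> E"
  unfolding avoiding_def by blast

lemma avoiding_Un: "avoiding W (E1 \<union> E2) = avoiding W E1 \<union> avoiding W E2"
  unfolding avoiding_def by blast

lemma simple_graph_avoiding:
  assumes "simple_graph V E"
  shows "simple_graph (V - W) (avoiding W E)"
  unfolding simple_graph_def
proof
  fix e assume "e \<in> avoiding W E"
  then have "e \<in> E" "e \<inter> W = {}" by (auto simp: avoiding_def)
  moreover obtain x y where "e = {x, y}" "x \<noteq> y" "x \<in> V" "y \<in> V"
    using assms \<open>e \<in> E\<close> unfolding simple_graph_def by blast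
  ultimately show "\<exists>x y. e = {x, y} \<and> x \<noteq> y \<and> x \<in> V - W \<and> y \<in> V - W"
    by blast
qed

definition edges_agree_outside :: "'a set \<Rightarrow> 'a set set \<Rightarrow> 'a set set \<Rightarrow> bool" where
  "edges_agree_outside C E1 E2 \<longleftrightarrow> (\<forall>e \<in> (E1 - E2) \<union> (E2 - E1). e \<inter> C \<noteq> {})"

lemma edges_agree_outside_avoiding:
  "edges_agree_outside C E1 E2 \<Longrightarrow> edges_agree_outside (C - W) (avoiding W E1) (avoiding W E2)"
  unfolding edges_agree_outside_def avoiding_def by auto

section \<open>Pairs of matchings glued along shared vertices\<close>

text \<open>
  The perfect matchings of the graph obtained from two copies of \<open>V\<close>, carrying the edges \<open>E1\<close>
  and \<open>E2\<close>, by identifying the two copies of each vertex of \<open>D\<close>.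
\<close>
definition double_matchings ::
    "'a set \<Rightarrow> 'a set \<Rightarrow> 'a set set \<Rightarrow> 'a set set \<Rightarrow> ('a set set \<times> 'a set set) set" where
  "double_matchings V D E1 E2 = {(M1, M2). M1 \<subseteq> E1 \<and> M2 \<subseteq> E2 \<and>
     (\<forall>v\<in>V - D. covered_once M1 v \<and> covered_once M2 v) \<and>
     (\<forall>v\<in>D. covered_once M1 v \<and> uncovered M2 v \<or> uncovered M1 v \<and> covered_once M2 v)}"

lemma double_matchingsI:
  assumes "M1 \<subseteq> E1" "M2 \<subseteq> E2"
    and "\<And>v. v \<in> V - D \<Longrightarrow> covered_once M1 v \<and> covered_once M2 v"
    and "\<And>v. v \<in> D \<Longrightarrow> covered_once M1 v \<and> uncovered M2 v \<or> uncovered M1 v \<and> covered_once M2 v"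
  shows "(M1, M2) \<in> double_matchings V D E1 E2"
  using assms unfolding double_matchings_def by blast

lemma double_matchingsD:
  assumes "(M1, M2) \<in> double_matchings V D E1 E2"
  shows "M1 \<subseteq> E1" "M2 \<subseteq> E2"
    and "v \<in> V - D \<Longrightarrow> covered_once M1 v \<and> covered_once M2 v"
    and "v \<in> D \<Longrightarrow> covered_once M1 v \<and> uncovered M2 v \<or> uncovered M1 v \<and> covered_once M2 v"
  using assms unfolding double_matchings_def by blast+

lemma double_matchings_shared_vertex:
  assumes "(M1, M2) \<in> double_matchings V D E1 E2" "d \<in> D" "e \<in> M1" "d \<in> e"
  shows "covered_once M1 d" "uncovered M2 d"
  using assms unfolding double_matchings_def uncovered_def by auto

lemma double_matchings_swap_iff:
  "(M1, M2) \<in> double_matchings V D E1 E2 \<longleftrightarrow> (M2, M1) \<in> double_matchings V D E2 E1"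
  unfolding double_matchings_def by (simp add: disj_commute) blast

lemma swap_double_matchings:
  "prod.swap ` double_matchings V D E1 E2 = double_matchings V D E2 E1"
proof (intro equalityI subsetI)
  fix x assume "x \<in> double_matchings V D E2 E1"
  then show "x \<in> prod.swap ` double_matchings V D E1 E2"
    by (metis double_matchings_swap_iff image_eqI prod.collapse swap_simp)
qed (auto simp: double_matchings_swap_iff)

lemma card_double_matchings_swap:
  "card {x \<in> double_matchings V D E1 E2. P x} =
    card {x \<in> double_matchings V D E2 E1. P (prod.swap x)}"
proof -
  have "{x \<in> double_matchings V D E2 E1. P (prod.swap x)} =
      prod.swap ` {x \<in> double_matchings V D E1 E2. P x}"
    unfolding swap_double_matchings[of V D E1 E2, symmetric] by force
  then show ?thesis
    by (simp add: card_image)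
qed

lemma bij_betw_remove_fst:
  assumes "\<And>M1 M2. (M1, M2) \<in> A \<Longrightarrow> e \<in> M1 \<and> (M1 - {e}, M2) \<in> B"
    and "\<And>M1 M2. (M1, M2) \<in> B \<Longrightarrow> e \<notin> M1 \<and> (insert e M1, M2) \<in> A"
  shows "bij_betw (\<lambda>(M1, M2). (M1 - {e}, M2)) A B"
proof (rule bij_betw_byWitness[where f' = "\<lambda>(M1, M2). (insert e M1, M2)"])
  show "\<forall>x\<in>A. (\<lambda>(M1, M2). (insert e M1, M2)) ((\<lambda>(M1, M2). (M1 - {e}, M2)) x) = x"
    using assms(1) by (auto simp: insert_absorb)
  show "\<forall>y\<in>B. (\<lambda>(M1, M2). (M1 - {e}, M2)) ((\<lambda>(M1, M2). (insert e M1, M2)) y) = y"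
    using assms(2) by auto
qed (use assms in fastforce)+

lemma remove_edge_to_unshared:
  assumes X: "(M1, M2) \<in> double_matchings V D E1 E2" and "e \<in> M1"
    and e: "e = {d, u}" "d \<in> D" "u \<in> V - D"
  shows "(M1 - {e}, M2) \<in>
      double_matchings (V - {d}) (insert u (D - {d})) (avoiding {d} E1) (avoiding {d} E2)"
    and "uncovered (M1 - {e}) u"
proof -
  have d: "covered_once M1 d" "uncovered M2 d"
    using double_matchings_shared_vertex[OF X \<open>d \<in> D\<close> \<open>e \<in> M1\<close>] e(1) by auto
  have u: "covered_once M1 u" "covered_once M2 u"
    using double_matchingsD(3)[OF X \<open>u \<in> V - D\<close>] by auto
  show u': "uncovered (M1 - {e}) u"
    using uncovered_Diff_covered_once[OF u(1) \<open>e \<in> M1\<close>] e(1) by blast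
  show "(M1 - {e}, M2) \<in>
      double_matchings (V - {d}) (insert u (D - {d})) (avoiding {d} E1) (avoiding {d} E2)"
  proof (rule double_matchingsI)
    show "M1 - {e} \<subseteq> avoiding {d} E1"
      using double_matchingsD(1)[OF X] covered_once_unique[OF d(1) \<open>e \<in> M1\<close>] e(1)
      unfolding avoiding_def by blast
    show "M2 \<subseteq> avoiding {d} E2"
      using double_matchingsD(2)[OF X] d(2) unfolding uncovered_def avoiding_def by blast
  next
    fix v assume "v \<in> V - {d} - insert u (D - {d})"
    then have "v \<notin> e" "v \<in> V - D" using e by auto
    then show "covered_once (M1 - {e}) v \<and> covered_once M2 v"
      using double_matchingsD(3)[OF X] by simp
  next
    fix v assume v: "v \<in> insert u (D - {d})"
    show "covered_once (M1 - {e}) v \<and> uncovered M2 v \<or>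
      uncovered (M1 - {e}) v \<and> covered_once M2 v"
    proof (cases "v = u")
      case False
      then have "v \<notin> e" "v \<in> D" using v e by auto
      then show ?thesis using double_matchingsD(4)[OF X] by simp
    qed (use u u' in simp)
  qed
qed

lemma insert_edge_to_unshared:
  assumes X: "(M1, M2) \<in>
      double_matchings (V - {d}) (insert u (D - {d})) (avoiding {d} E1) (avoiding {d} E2)"
    and u: "uncovered M1 u" and e: "e \<in> E1" "e = {d, u}" "d \<in> D" "u \<in> V - D"
  shows "(insert e M1, M2) \<in> double_matchings V D E1 E2"
proof (rule double_matchingsI)
  have d: "uncovered M1 d" "uncovered M2 d"
    using double_matchingsD(1,2)[OF X] unfolding uncovered_def avoiding_def by blast+
  have "covered_once M2 u"
    using double_matchingsD(4)[OF X insertI1] u by (metis not_covered_once_and_uncovered)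
  moreover have "covered_once (insert e M1) d" "covered_once (insert e M1) u"
    using d(1) u e(2) by (auto intro!: covered_once_insert_uncovered)
  ultimately show "covered_once (insert e M1) v \<and> covered_once M2 v" if "v \<in> V - D" for v
  proof (cases "v = u")
    case False
    then have "v \<notin> e" "v \<in> V - {d} - insert u (D - {d})" using that e by auto
    then show ?thesis using double_matchingsD(3)[OF X] by simp
  qed simp
  show "covered_once (insert e M1) v \<and> uncovered M2 v \<or>
      uncovered (insert e M1) v \<and> covered_once M2 v"
    if "v \<in> D" for v
  proof (cases "v = d")
    case False
    then have "v \<notin> e" "v \<in> insert u (D - {d})" using that e by auto
    then show ?thesis using double_matchingsD(4)[OF X] by simp
  qed (use d \<open>covered_once (insert e M1) d\<close> in simp)
next
  show "insert e M1 \<subseteq> E1" "M2 \<subseteq> E2"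
    using double_matchingsD(1,2)[OF X] e(1) avoiding_subset by blast+
qed

lemma bij_betw_remove_edge_to_unshared:
  assumes "e \<in> E1" "e = {d, u}" "d \<in> D" "u \<in> V - D"
  shows "bij_betw (\<lambda>(M1, M2). (M1 - {e}, M2)) {x \<in> double_matchings V D E1 E2. e \<in> fst x}
     {x \<in> double_matchings (V - {d}) (insert u (D - {d})) (avoiding {d} E1) (avoiding {d} E2).
        uncovered (fst x) u}"
proof (rule bij_betw_remove_fst)
  show "e \<in> M1 \<and> (M1 - {e}, M2) \<in> {x \<in> double_matchings (V - {d}) (insert u (D - {d}))
      (avoiding {d} E1) (avoiding {d} E2). uncovered (fst x) u}"
    if "(M1, M2) \<in> {x \<in> double_matchings V D E1 E2. e \<in> fst x}" for M1 M2
    using that remove_edge_to_unshared[OF _ _ assms(2-)] by auto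
  show "e \<notin> M1 \<and> (insert e M1, M2) \<in> {x \<in> double_matchings V D E1 E2. e \<in> fst x}"
    if "(M1, M2) \<in> {x \<in> double_matchings (V - {d}) (insert u (D - {d}))
      (avoiding {d} E1) (avoiding {d} E2). uncovered (fst x) u}" for M1 M2
    using that insert_edge_to_unshared[OF _ _ assms] double_matchingsD(1) assms(2)
    by (fastforce simp: avoiding_def)
qed

lemma remove_edge_to_shared:
  assumes X: "(M1, M2) \<in> double_matchings V D E1 E2" and "e \<in> M1"
    and e: "e = {d, u}" "d \<in> D" "u \<in> D"
  shows "(M1 - {e}, M2) \<in> double_matchings (V - e) (D - e) (avoiding e E1) (avoiding e E2)"
proof (rule double_matchingsI)
  have d: "covered_once M1 d" "uncovered M2 d" and u: "covered_once M1 u" "uncovered M2 u"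
    using double_matchings_shared_vertex[OF X e(2) \<open>e \<in> M1\<close>]
      double_matchings_shared_vertex[OF X e(3) \<open>e \<in> M1\<close>] e(1) by simp_all
  have "d \<notin> f" "u \<notin> f" if "f \<in> M1 - {e}" for f
    using that covered_once_unique[OF d(1) \<open>e \<in> M1\<close>] covered_once_unique[OF u(1) \<open>e \<in> M1\<close>] e(1)
    by blast+
  then show "M1 - {e} \<subseteq> avoiding e E1"
    using double_matchingsD(1)[OF X] e(1) by (auto simp: avoiding_def)
  show "M2 \<subseteq> avoiding e E2"
    using double_matchingsD(2)[OF X] d(2) u(2) e(1) by (auto simp: uncovered_def avoiding_def)
next
  fix v assume "v \<in> V - e - (D - e)"
  then have "v \<notin> e" "v \<in> V - D" using e by auto
  then show "covered_once (M1 - {e}) v \<and> covered_once M2 v"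
    using double_matchingsD(3)[OF X] by simp
next
  fix v assume "v \<in> D - e"
  then have "v \<notin> e" "v \<in> D" using e by auto
  then show "covered_once (M1 - {e}) v \<and> uncovered M2 v \<or>
      uncovered (M1 - {e}) v \<and> covered_once M2 v"
    using double_matchingsD(4)[OF X] by simp
qed

lemma insert_edge_to_shared:
  assumes X: "(M1, M2) \<in> double_matchings (V - e) (D - e) (avoiding e E1) (avoiding e E2)"
    and e: "e \<in> E1" "e = {d, u}" "d \<in> D" "u \<in> D"
  shows "(insert e M1, M2) \<in> double_matchings V D E1 E2"
proof (rule double_matchingsI)
  have ends: "uncovered M1 d" "uncovered M2 d" "uncovered M1 u" "uncovered M2 u"
    using double_matchingsD(1,2)[OF X] e(2) by (auto simp: uncovered_def avoiding_def)
  then have "covered_once (insert e M1) d" "covered_once (insert e M1) u"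
    using e(2) by (auto intro!: covered_once_insert_uncovered)
  then show "covered_once (insert e M1) v \<and> uncovered M2 v \<or>
      uncovered (insert e M1) v \<and> covered_once M2 v"
    if "v \<in> D" for v
  proof (cases "v \<in> e")
    case False
    then have "v \<in> D - e" using that e by auto
    then show ?thesis using False double_matchingsD(4)[OF X] by simp
  qed (use ends e(2) in auto)
  show "covered_once (insert e M1) v \<and> covered_once M2 v" if "v \<in> V - D" for v
  proof -
    have "v \<notin> e" "v \<in> V - e - (D - e)" using that e by auto
    then show ?thesis using double_matchingsD(3)[OF X] by simp
  qed
next
  show "insert e M1 \<subseteq> E1" "M2 \<subseteq> E2"
    using double_matchingsD(1,2)[OF X] e(1) avoiding_subset by blast+
qed

lemma bij_betw_remove_edge_to_shared:
  assumes "e \<in> E1" "e = {d, u}" "d \<in> D" "u \<in> D"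
  shows "bij_betw (\<lambda>(M1, M2). (M1 - {e}, M2)) {x \<in> double_matchings V D E1 E2. e \<in> fst x}
     (double_matchings (V - e) (D - e) (avoiding e E1) (avoiding e E2))"
proof (rule bij_betw_remove_fst)
  show "e \<in> M1 \<and> (M1 - {e}, M2) \<in> double_matchings (V - e) (D - e) (avoiding e E1) (avoiding e E2)"
    if "(M1, M2) \<in> {x \<in> double_matchings V D E1 E2. e \<in> fst x}" for M1 M2
    using that remove_edge_to_shared[OF _ _ assms(2-)] by auto
  show "e \<notin> M1 \<and> (insert e M1, M2) \<in> {x \<in> double_matchings V D E1 E2. e \<in> fst x}"
    if "(M1, M2) \<in> double_matchings (V - e) (D - e) (avoiding e E1) (avoiding e E2)" for M1 M2
    using that insert_edge_to_shared[OF _ assms] double_matchingsD(1) assms(2)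
    by (fastforce simp: avoiding_def)
qed

lemma finite_double_matchings:
  "finite E1 \<Longrightarrow> finite E2 \<Longrightarrow> finite (double_matchings V D E1 E2)"
  by (rule finite_subset[of _ "Pow E1 \<times> Pow E2"]) (auto simp: double_matchings_def)

lemma card_double_matchings_split_shared:
  assumes "finite E1" "finite E2" "u \<in> D"
  shows "card (double_matchings V D E1 E2) =
    card {x \<in> double_matchings V D E1 E2. uncovered (fst x) u} +
    card {x \<in> double_matchings V D E1 E2. uncovered (snd x) u}"
proof -
  have "double_matchings V D E1 E2 = {x \<in> double_matchings V D E1 E2. uncovered (fst x) u} \<union>
      {x \<in> double_matchings V D E1 E2. uncovered (snd x) u}"
    using double_matchingsD(4)[OF _ \<open>u \<in> D\<close>] by fastforce
  moreover have "{x \<in> double_matchings V D E1 E2. uncovered (fst x) u} \<inter>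
      {x \<in> double_matchings V D E1 E2. uncovered (snd x) u} = {}"
    using double_matchingsD(4)[OF _ \<open>u \<in> D\<close>] not_covered_once_and_uncovered by fastforce
  ultimately show ?thesis
    using finite_double_matchings[OF assms(1,2)]
    by (metis (no_types, lifting) card_Un_disjoint finite_Un)
qed

lemma card_containing_edge_to_unshared:
  assumes "finite E1" "finite E2" "e \<in> E1" "e \<in> E2" "e = {d, u}" "d \<in> D" "u \<in> V - D"
  shows "card {x \<in> double_matchings V D E1 E2. e \<in> fst x} +
    card {x \<in> double_matchings V D E1 E2. e \<in> snd x}
    = card (double_matchings (V - {d}) (insert u (D - {d})) (avoiding {d} E1) (avoiding {d} E2))"
proof -
  let ?X = "double_matchings (V - {d}) (insert u (D - {d})) (avoiding {d} E1) (avoiding {d} E2)"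
  have "card {x \<in> double_matchings V D E1 E2. e \<in> fst x} = card {x \<in> ?X. uncovered (fst x) u}"
    using bij_betw_remove_edge_to_unshared[OF assms(3,5-)] by (rule bij_betw_same_card)
  moreover have "card {x \<in> double_matchings V D E1 E2. e \<in> snd x} =
      card {x \<in> ?X. uncovered (snd x) u}"
  proof -
    have "card {x \<in> double_matchings V D E1 E2. e \<in> snd x} =
        card {x \<in> double_matchings V D E2 E1. e \<in> fst x}"
      using card_double_matchings_swap[of V D E1 E2 "\<lambda>x. e \<in> snd x"] by simp
    also have "\<dots> = card {x \<in> double_matchings (V - {d}) (insert u (D - {d}))
        (avoiding {d} E2) (avoiding {d} E1). uncovered (fst x) u}"
      using bij_betw_remove_edge_to_unshared[OF assms(4,5-)] by (rule bij_betw_same_card)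
    also have "\<dots> = card {x \<in> ?X. uncovered (snd x) u}"
      using card_double_matchings_swap[of "V - {d}" _ "avoiding {d} E2" "avoiding {d} E1"] by simp
    finally show ?thesis .
  qed
  moreover have "finite (avoiding {d} E1)" "finite (avoiding {d} E2)"
    using assms(1,2) avoiding_subset finite_subset by blast+
  ultimately show ?thesis
    using card_double_matchings_split_shared[of _ _ u "insert u (D - {d})"] by simp
qed

lemma card_fst_containing_shared_edge:
  assumes "e = {d, u}" "d \<in> D" "u \<in> D"
  shows "card {x \<in> double_matchings V D E1 E2. e \<in> fst x}
    = (if e \<in> E1 then card (double_matchings (V - e) (D - e) (avoiding e E1) (avoiding e E2))
       else 0)"
proof (cases "e \<in> E1")
  case True
  then show ?thesis
    using bij_betw_same_card[OF bij_betw_remove_edge_to_shared[OF True assms]] by simp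
next
  case False
  then have "{x \<in> double_matchings V D E1 E2. e \<in> fst x} = {}"
    using double_matchingsD(1) by fastforce
  then show ?thesis using False by (simp only: card.empty if_False)
qed

lemma card_snd_containing_shared_edge:
  assumes "e = {d, u}" "d \<in> D" "u \<in> D"
  shows "card {x \<in> double_matchings V D E1 E2. e \<in> snd x}
    = (if e \<in> E2 then card (double_matchings (V - e) (D - e) (avoiding e E1) (avoiding e E2))
       else 0)"
  using card_double_matchings_swap[of V D E1 E2 "\<lambda>x. e \<in> snd x"]
    card_fst_containing_shared_edge[OF assms, of V E2 E1]
    card_double_matchings_swap[of "V - e" "D - e" "avoiding e E2" "avoiding e E1" "\<lambda>_. True"]
  by simp

lemma uncovered_snd_eq_UN_covering_edge:
  assumes "d \<in> D"
  shows "{x \<in> double_matchings V D E1 E2. uncovered (snd x) d}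
    = (\<Union>e\<in>{e \<in> E1 \<union> E2. d \<in> e}. {x \<in> double_matchings V D E1 E2. e \<in> fst x})"
proof (intro equalityI subsetI)
  fix x assume x: "x \<in> {x \<in> double_matchings V D E1 E2. uncovered (snd x) d}"
  then obtain M1 M2 where M: "x = (M1, M2)" "(M1, M2) \<in> double_matchings V D E1 E2" "uncovered M2 d"
    by (cases x) auto
  then have "covered_once M1 d"
    using double_matchingsD(4)[OF M(2) assms] by (metis not_covered_once_and_uncovered)
  then obtain e where "e \<in> M1" "d \<in> e"
    unfolding covered_once_def by blast
  with M double_matchingsD(1)[OF M(2)]
  show "x \<in> (\<Union>e\<in>{e \<in> E1 \<union> E2. d \<in> e}. {x \<in> double_matchings V D E1 E2. e \<in> fst x})"
    by auto
next
  fix x assume "x \<in> (\<Union>e\<in>{e \<in> E1 \<union> E2. d \<in> e}. {x \<in> double_matchings V D E1 E2. e \<in> fst x})"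
  then obtain e M1 M2 where "x = (M1, M2)" "(M1, M2) \<in> double_matchings V D E1 E2" "e \<in> M1" "d \<in> e"
    by (cases x) auto
  then show "x \<in> {x \<in> double_matchings V D E1 E2. uncovered (snd x) d}"
    using double_matchings_shared_vertex(2)[OF _ assms] by auto
qed

lemma card_uncovered_snd_eq_sum:
  assumes "finite E1" "finite E2" "d \<in> D"
  shows "card {x \<in> double_matchings V D E1 E2. uncovered (snd x) d}
    = (\<Sum>e\<in>{e \<in> E1 \<union> E2. d \<in> e}. card {x \<in> double_matchings V D E1 E2. e \<in> fst x})"
  unfolding uncovered_snd_eq_UN_covering_edge[OF assms(3)]
proof (rule card_UN_disjoint)
  show "finite {e \<in> E1 \<union> E2. d \<in> e}" using assms(1,2) by simp
  show "\<forall>e\<in>{e \<in> E1 \<union> E2. d \<in> e}. finite {x \<in> double_matchings V D E1 E2. e \<in> fst x}"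
    using finite_double_matchings[OF assms(1,2)] by simp
  show "\<forall>e\<in>{e \<in> E1 \<union> E2. d \<in> e}. \<forall>e'\<in>{e \<in> E1 \<union> E2. d \<in> e}. e \<noteq> e' \<longrightarrow>
      {x \<in> double_matchings V D E1 E2. e \<in> fst x} \<inter>
      {x \<in> double_matchings V D E1 E2. e' \<in> fst x} = {}"
  proof (intro ballI impI equalityI subsetI)
    fix e e' x
    assume "e \<in> {e \<in> E1 \<union> E2. d \<in> e}" "e' \<in> {e \<in> E1 \<union> E2. d \<in> e}" "e \<noteq> e'"
      and "x \<in> {x \<in> double_matchings V D E1 E2. e \<in> fst x} \<inter>
        {x \<in> double_matchings V D E1 E2. e' \<in> fst x}"
    then show "x \<in> {}"
      using double_matchings_shared_vertex(1)[OF _ assms(3)] covered_once_unique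
      by (metis (no_types, lifting) Int_iff mem_Collect_eq prod.collapse)
  qed simp
qed

lemma card_double_matchings_by_covering_edge:
  assumes "finite E1" "finite E2" "d \<in> D"
  shows "card (double_matchings V D E1 E2) = (\<Sum>e\<in>{e \<in> E1 \<union> E2. d \<in> e}.
    card {x \<in> double_matchings V D E1 E2. e \<in> fst x} +
    card {x \<in> double_matchings V D E1 E2. e \<in> snd x})"
proof -
  have "card {x \<in> double_matchings V D E1 E2. uncovered (fst x) d}
      = card {x \<in> double_matchings V D E2 E1. uncovered (snd x) d}"
    using card_double_matchings_swap[of V D E1 E2 "\<lambda>x. uncovered (fst x) d"] by simp
  also have "\<dots> = (\<Sum>e\<in>{e \<in> E2 \<union> E1. d \<in> e}. card {x \<in> double_matchings V D E2 E1. e \<in> fst x})"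
    using card_uncovered_snd_eq_sum[OF assms(2,1,3)] .
  also have "\<dots> = (\<Sum>e\<in>{e \<in> E1 \<union> E2. d \<in> e}. card {x \<in> double_matchings V D E1 E2. e \<in> snd x})"
    using card_double_matchings_swap[of V D E1 E2 "\<lambda>x. _ \<in> snd x"] by (simp add: Un_commute)
  finally show ?thesis
    using card_double_matchings_split_shared[OF assms] card_uncovered_snd_eq_sum[OF assms]
    by (simp add: sum.distrib)
qed

lemma two_power_dvd_card_containing_shared_edge:
  assumes fin: "finite D" "finite C"
    and e: "e = {d, u}" "d \<noteq> u" "d \<in> D" "u \<in> D" "d \<notin> C"
    and common: "u \<notin> C \<Longrightarrow> e \<in> E1 \<and> e \<in> E2"
    and smaller: "2 ^ (card (D - e) div 2 - card (C - e)) dvd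
      card (double_matchings (V - e) (D - e) (avoiding e E1) (avoiding e E2))"
  shows "2 ^ (card D div 2 - card C) dvd
    card {x \<in> double_matchings V D E1 E2. e \<in> fst x} +
    card {x \<in> double_matchings V D E1 E2. e \<in> snd x}"
proof -
  let ?c = "card (double_matchings (V - e) (D - e) (avoiding e E1) (avoiding e E2))"
  have parts: "card {x \<in> double_matchings V D E1 E2. e \<in> fst x} = (if e \<in> E1 then ?c else 0)"
    "card {x \<in> double_matchings V D E1 E2. e \<in> snd x} = (if e \<in> E2 then ?c else 0)"
    using card_fst_containing_shared_edge[OF e(1,3,4)] card_snd_containing_shared_edge[OF e(1,3,4)]
    by simp_all
  have card_D: "card (D - e) = card D - 2"
    using e fin(1) by (simp add: card_Diff_subset)
  show ?thesis
  proof (cases "u \<in> C")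
    case True
    then have "card (C - e) = card C - 1" "card C \<ge> 1"
      using e(1,5) fin(2) by (auto simp: Suc_le_eq card_gt_0_iff)
    then have "card (D - e) div 2 - card (C - e) = card D div 2 - card C"
      using card_D by linarith
    then show ?thesis
      using smaller parts by simp
  next
    case False
    then have "C - e = C"
      using e(1,5) by blast
    then have "card (D - e) div 2 - card (C - e) = card D div 2 - card C - 1"
      using card_D by simp
    then have "2 ^ (card D div 2 - card C - 1) dvd ?c"
      using smaller by simp
    moreover have "(2::nat) ^ (card D div 2 - card C) dvd 2 * 2 ^ (card D div 2 - card C - 1)"
      by (cases "card D div 2 - card C") simp_all
    ultimately have "2 ^ (card D div 2 - card C) dvd 2 * ?c"
      by (meson dvd_trans dvd_refl mult_dvd_mono)
    then show ?thesis
      using parts common[OF False] by (simp add: mult_2)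
  qed
qed

lemma two_power_dvd_card_containing_edge:
  assumes V: "finite V" "simple_graph V (E1 \<union> E2)" "D \<subseteq> V"
    and C: "C \<subseteq> D" "edges_agree_outside C E1 E2"
    and d: "d \<in> D" "d \<notin> C" and e: "e \<in> E1 \<union> E2" "d \<in> e"
    and smaller: "\<And>W D'. d \<in> W \<Longrightarrow> D' \<subseteq> V - W \<Longrightarrow> C - W \<subseteq> D' \<Longrightarrow>
      2 ^ (card D' div 2 - card (C - W)) dvd
      card (double_matchings (V - W) D' (avoiding W E1) (avoiding W E2))"
  shows "2 ^ (card D div 2 - card C) dvd
    card {x \<in> double_matchings V D E1 E2. e \<in> fst x} +
    card {x \<in> double_matchings V D E1 E2. e \<in> snd x}"
proof -
  obtain u where u: "e = {d, u}" "d \<noteq> u" "u \<in> V"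
    using simple_graph_edge_through[OF V(2) e] .
  have fin: "finite E1" "finite E2" "finite D" "finite C"
    using finite_edges_if_simple_graph[OF V(2,1)] finite_subset[OF V(3,1)] finite_subset[OF C(1)]
    by auto
  have common: "e \<in> E1 \<and> e \<in> E2" if "u \<notin> C"
  proof -
    have "e \<inter> C = {}" using u(1) d(2) that by blast
    then show ?thesis using C(2) e(1) unfolding edges_agree_outside_def by blast
  qed
  show ?thesis
  proof (cases "u \<in> D")
    case False
    have "card (insert u (D - {d})) = card D"
      using False card_Suc_Diff1[OF fin(3) d(1)] fin(3) by simp
    moreover have "C - {d} = C" "u \<notin> C"
      using d(2) False C(1) by blast+
    moreover have "2 ^ (card (insert u (D - {d})) div 2 - card (C - {d})) dvd
        card (double_matchings (V - {d}) (insert u (D - {d})) (avoiding {d} E1) (avoiding {d} E2))"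
      using V(3) C(1) u(2,3) by (intro smaller) auto
    ultimately show ?thesis
      using card_containing_edge_to_unshared[OF fin(1,2) _ _ u(1) d(1) DiffI[OF u(3) False]] common
      by simp
  next
    case True
    have "D - e \<subseteq> V - e" "C - e \<subseteq> D - e"
      using V(3) C(1) by blast+
    then show ?thesis
      using two_power_dvd_card_containing_shared_edge[OF fin(3,4) u(1,2) d(1) True d(2) common]
        smaller[OF e(2)] by blast
  qed
qed

lemma two_power_dvd_card_double_matchings:
  assumes "finite V" "simple_graph V (E1 \<union> E2)" "D \<subseteq> V" "C \<subseteq> D" "edges_agree_outside C E1 E2"
  shows "2 ^ (card D div 2 - card C) dvd card (double_matchings V D E1 E2)"
  using assms
proof (induction "card V" arbitrary: V D C E1 E2 rule: less_induct)
  case less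
  show ?case
  proof (cases "D \<subseteq> C")
    case True
    then have "card D \<le> card C"
      using less.prems(1,3,4) by (meson card_mono finite_subset)
    then show ?thesis by simp
  next
    case False
    then obtain d where d: "d \<in> D" "d \<notin> C" by blast
    have smaller: "2 ^ (card D' div 2 - card (C - W)) dvd
        card (double_matchings (V - W) D' (avoiding W E1) (avoiding W E2))"
      if "d \<in> W" "D' \<subseteq> V - W" "C - W \<subseteq> D'" for W D'
    proof (rule less.hyps)
      have "d \<in> V" using less.prems(3) d(1) by blast
      then show "card (V - W) < card V"
        using that(1) by (intro psubset_card_mono less.prems(1)) blast
      show "simple_graph (V - W) (avoiding W E1 \<union> avoiding W E2)"
        using simple_graph_avoiding[OF less.prems(2)] by (simp add: avoiding_Un)
      show "edges_agree_outside (C - W) (avoiding W E1) (avoiding W E2)"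
        using edges_agree_outside_avoiding[OF less.prems(5)] .
    qed (use less.prems(1) that in auto)
    have "finite (E1 \<union> E2)"
      using finite_edges_if_simple_graph[OF less.prems(2,1)] .
    then have "card (double_matchings V D E1 E2) = (\<Sum>e\<in>{e \<in> E1 \<union> E2. d \<in> e}.
        card {x \<in> double_matchings V D E1 E2. e \<in> fst x} +
    card {x \<in> double_matchings V D E1 E2. e \<in> snd x})"
      using card_double_matchings_by_covering_edge[OF _ _ d(1)] by simp
    moreover have "2 ^ (card D div 2 - card C) dvd (\<Sum>e\<in>{e \<in> E1 \<union> E2. d \<in> e}.
        card {x \<in> double_matchings V D E1 E2. e \<in> fst x} +
    card {x \<in> double_matchings V D E1 E2. e \<in> snd x})"
      using two_power_dvd_card_containing_edge[OF less.prems d _ _ smaller] by (intro dvd_sum) blast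
    ultimately show ?thesis by simp
  qed
qed

section \<open>Folding the grid along its diagonal\<close>

definition grid_adjacent :: "nat \<times> nat \<Rightarrow> nat \<times> nat \<Rightarrow> bool" where
  "grid_adjacent p q \<longleftrightarrow>
    fst p = fst q \<and> (snd q = Suc (snd p) \<or> snd p = Suc (snd q)) \<or>
    snd p = snd q \<and> (fst q = Suc (fst p) \<or> fst p = Suc (fst q))"

lemma sum_squares_eq_one_int:
  "(x::int)^2 + y^2 = 1 \<longleftrightarrow> x = 0 \<and> \<bar>y\<bar> = 1 \<or> y = 0 \<and> \<bar>x\<bar> = 1"
proof
  assume sum: "x^2 + y^2 = 1"
  have "0 \<le> x^2" "0 \<le> y^2" by simp_all
  then have "x^2 \<le> 1" "y^2 \<le> 1" using sum by linarith+
  then have "\<bar>x\<bar> \<le> 1" "\<bar>y\<bar> \<le> 1"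
    by (simp_all add: abs_square_le_1)
  then have "x \<in> {-1, 0, 1}" "y \<in> {-1, 0, 1}" by auto
  then show "x = 0 \<and> \<bar>y\<bar> = 1 \<or> y = 0 \<and> \<bar>x\<bar> = 1"
    using sum by auto
qed (auto simp: power2_eq_square abs_if split: if_splits)

lemma unit_distance_iff_grid_adjacent:
  "sqrt ((real (fst p) - real (fst q))^2 + (real (snd p) - real (snd q))^2) = 1 \<longleftrightarrow> grid_adjacent p q"
proof -
  have "(real (fst p) - real (fst q))^2 + (real (snd p) - real (snd q))^2
      = of_int ((int (fst p) - int (fst q))^2 + (int (snd p) - int (snd q))^2)"
    by simp
  then have "sqrt ((real (fst p) - real (fst q))^2 + (real (snd p) - real (snd q))^2) = 1 \<longleftrightarrow>
      (int (fst p) - int (fst q))^2 + (int (snd p) - int (snd q))^2 = 1"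
    by (metis of_int_eq_1_iff real_sqrt_eq_1_iff)
  also have "\<dots> \<longleftrightarrow> grid_adjacent p q"
    unfolding sum_squares_eq_one_int grid_adjacent_def by linarith
  finally show ?thesis .
qed

lemma mem_grid_edges:
  "e \<in> grid_edges n \<longleftrightarrow>
    (\<exists>p q. e = {p, q} \<and> p \<in> grid_vertices n \<and> q \<in> grid_vertices n \<and> grid_adjacent p q)"
  unfolding grid_edges_def unit_distance_iff_grid_adjacent by blast

definition upper_half :: "nat \<Rightarrow> (nat \<times> nat) set" where
  "upper_half n = {p \<in> grid_vertices n. fst p \<le> snd p}"

definition lower_half :: "nat \<Rightarrow> (nat \<times> nat) set" where
  "lower_half n = {p \<in> grid_vertices n. snd p \<le> fst p}"

definition diagonal :: "nat \<Rightarrow> (nat \<times> nat) set" where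
  "diagonal n = {p \<in> grid_vertices n. fst p = snd p}"

lemma finite_upper_half: "finite (upper_half n)"
  unfolding upper_half_def grid_vertices_def by simp

lemma diagonal_subset_upper_half: "diagonal n \<subseteq> upper_half n"
  unfolding diagonal_def upper_half_def by auto

lemma card_diagonal: "card (diagonal n) = n"
proof -
  have "diagonal n = (\<lambda>j. (j, j)) ` {0..<n}"
    unfolding diagonal_def grid_vertices_def by auto
  then show ?thesis by (simp add: card_image inj_on_def)
qed

definition reflect :: "(nat \<times> nat) set \<Rightarrow> (nat \<times> nat) set" where
  "reflect e = prod.swap ` e"

lemma reflect_reflect [simp]: "reflect (reflect e) = e"
  unfolding reflect_def by (simp add: image_image)

lemma mem_reflect_iff: "v \<in> reflect e \<longleftrightarrow> prod.swap v \<in> e"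
  unfolding reflect_def by force

lemma swap_mem_grid_vertices_iff [simp]: "prod.swap p \<in> grid_vertices n \<longleftrightarrow> p \<in> grid_vertices n"
  unfolding grid_vertices_def by (cases p) auto

lemma reflect_subset_upper_half_iff: "reflect e \<subseteq> upper_half n \<longleftrightarrow> e \<subseteq> lower_half n"
  unfolding reflect_def upper_half_def lower_half_def grid_vertices_def by auto

lemma reflect_subset_lower_half_iff: "reflect e \<subseteq> lower_half n \<longleftrightarrow> e \<subseteq> upper_half n"
  using reflect_subset_upper_half_iff[of "reflect e"] by simp

lemma grid_adjacent_swap: "grid_adjacent (prod.swap p) (prod.swap q) \<longleftrightarrow> grid_adjacent p q"
  unfolding grid_adjacent_def by auto

lemma reflect_mem_grid_edges:
  assumes "e \<in> grid_edges n"
  shows "reflect e \<in> grid_edges n"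
proof -
  obtain p q where "e = {p, q}" "p \<in> grid_vertices n" "q \<in> grid_vertices n" "grid_adjacent p q"
    using assms unfolding mem_grid_edges by blast
  then have "reflect e = {prod.swap p, prod.swap q}" "prod.swap p \<in> grid_vertices n"
    "prod.swap q \<in> grid_vertices n" "grid_adjacent (prod.swap p) (prod.swap q)"
    by (simp_all add: reflect_def grid_adjacent_swap)
  then show ?thesis
    unfolding mem_grid_edges by blast
qed

lemma grid_edge_subset_half:
  assumes "e \<in> grid_edges n"
  shows "e \<subseteq> upper_half n \<or> e \<subseteq> lower_half n"
proof -
  obtain p q where "e = {p, q}" "p \<in> grid_vertices n" "q \<in> grid_vertices n" "grid_adjacent p q"
    using assms unfolding mem_grid_edges by blast
  then show ?thesis
    unfolding upper_half_def lower_half_def grid_adjacent_def by auto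
qed

lemma grid_edge_not_subset_both_halves:
  assumes "e \<in> grid_edges n" "e \<subseteq> upper_half n" "e \<subseteq> lower_half n"
  shows False
proof -
  obtain p q where "e = {p, q}" "grid_adjacent p q"
    using assms(1) unfolding mem_grid_edges by blast
  then show False
    using assms(2,3) unfolding upper_half_def lower_half_def grid_adjacent_def by auto
qed

lemma reflect_image_reflect_image [simp]: "reflect ` reflect ` M = M"
  by (simp add: image_image)

lemma covered_once_of_reflect_image:
  assumes "covered_once (reflect ` M) v"
  shows "covered_once M (prod.swap v)"
proof -
  obtain e where e: "e \<in> reflect ` M" "v \<in> e" and uniq: "\<And>f. f \<in> reflect ` M \<Longrightarrow> v \<in> f \<Longrightarrow> f = e"
    using covered_onceE[OF assms] by metis
  show ?thesis
    unfolding covered_once_def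
  proof (rule ex1I[of _ "reflect e"])
    show "reflect e \<in> M \<and> prod.swap v \<in> reflect e"
      using e by (auto simp: mem_reflect_iff)
    fix f assume "f \<in> M \<and> prod.swap v \<in> f"
    then have "reflect f = e"
      by (intro uniq) (auto simp: mem_reflect_iff)
    then show "f = reflect e" by auto
  qed
qed

lemma covered_once_reflect_image: "covered_once (reflect ` M) v \<longleftrightarrow> covered_once M (prod.swap v)"
  using covered_once_of_reflect_image[of M v]
    covered_once_of_reflect_image[of "reflect ` M" "prod.swap v"]
  by auto

lemma uncovered_reflect_image: "uncovered (reflect ` M) v \<longleftrightarrow> uncovered M (prod.swap v)"
  unfolding uncovered_def by (auto simp: mem_reflect_iff)

definition upper_edges :: "nat \<Rightarrow> (nat \<times> nat) set set \<Rightarrow> (nat \<times> nat) set set" where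
  "upper_edges n E = {e \<in> E. e \<subseteq> upper_half n}"

definition lower_edges :: "nat \<Rightarrow> (nat \<times> nat) set set \<Rightarrow> (nat \<times> nat) set set" where
  "lower_edges n E = {e \<in> E. e \<subseteq> lower_half n}"

definition fold_matching ::
    "nat \<Rightarrow> (nat \<times> nat) set set \<Rightarrow> (nat \<times> nat) set set \<times> (nat \<times> nat) set set" where
  "fold_matching n M = (upper_edges n M, reflect ` lower_edges n M)"

lemma upper_edges_Un_lower_edges:
  "E \<subseteq> grid_edges n \<Longrightarrow> upper_edges n E \<union> lower_edges n E = E"
  unfolding upper_edges_def lower_edges_def using grid_edge_subset_half by blast

lemma fold_matching_mem_double_matchings:
  assumes E: "E \<subseteq> grid_edges n" and M: "perfect_matching (grid_vertices n) E M"
  shows "fold_matching n M \<in>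
    double_matchings (upper_half n) (diagonal n) (upper_edges n E) (reflect ` lower_edges n E)"
  unfolding fold_matching_def
proof (rule double_matchingsI)
  have ME: "M \<subseteq> E" and cover: "\<And>v. v \<in> grid_vertices n \<Longrightarrow> covered_once M v"
    using M unfolding perfect_matching_def covered_once_def by blast+
  show "upper_edges n M \<subseteq> upper_edges n E" "reflect ` lower_edges n M \<subseteq> reflect ` lower_edges n E"
    using ME unfolding upper_edges_def lower_edges_def by blast+
  have half: "e \<subseteq> upper_half n \<or> e \<subseteq> lower_half n" "\<not> (e \<subseteq> upper_half n \<and> e \<subseteq> lower_half n)"
    if "e \<in> M" for e
    using that ME E grid_edge_subset_half grid_edge_not_subset_both_halves by blast+
  show "covered_once (upper_edges n M) v \<and> covered_once (reflect ` lower_edges n M) v"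
    if "v \<in> upper_half n - diagonal n" for v
  proof -
    have v: "v \<in> grid_vertices n" "fst v < snd v"
      using that unfolding upper_half_def diagonal_def by auto
    obtain e where e: "e \<in> M" "v \<in> e" using cover[OF v(1)] by (blast elim: covered_onceE)
    obtain f where f: "f \<in> M" "prod.swap v \<in> f" using cover[of "prod.swap v"] v(1)
      by (auto elim: covered_onceE)
    have "e \<subseteq> upper_half n" using half[OF e(1)] e(2) v(2) unfolding lower_half_def by auto
    moreover have "f \<subseteq> lower_half n" using half[OF f(1)] f(2) v(2) unfolding upper_half_def by auto
    ultimately show ?thesis
      unfolding upper_edges_def lower_edges_def covered_once_reflect_image
      using covered_once_filter_iff[OF cover e(1,2)] covered_once_filter_iff[OF cover f(1,2)] v(1)
      by simp
  qed
  show "covered_once (upper_edges n M) v \<and> uncovered (reflect ` lower_edges n M) v \<or>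
      uncovered (upper_edges n M) v \<and> covered_once (reflect ` lower_edges n M) v"
    if "v \<in> diagonal n" for v
  proof -
    have v: "v \<in> grid_vertices n" "prod.swap v = v"
      using that unfolding diagonal_def by (auto simp: prod.swap_def prod_eq_iff)
    obtain e where e: "e \<in> M" "v \<in> e" using cover[OF v(1)] by (blast elim: covered_onceE)
    then show ?thesis
      unfolding upper_edges_def lower_edges_def
        covered_once_reflect_image uncovered_reflect_image v(2)
      using covered_once_filter_iff[OF cover e] uncovered_filter_iff[OF cover e] half[OF e(1)] v(1)
      by auto
  qed
qed

lemma unfold_perfect_matching:
  assumes X: "(M1, M2) \<in>
      double_matchings (upper_half n) (diagonal n) (upper_edges n E) (reflect ` lower_edges n E)"
  shows "perfect_matching (grid_vertices n) E (M1 \<union> reflect ` M2)"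
  unfolding perfect_matching_def
proof (intro conjI ballI)
  have M1: "M1 \<subseteq> upper_edges n E"
    using double_matchingsD(1)[OF X] .
  have "reflect ` M2 \<subseteq> reflect ` reflect ` lower_edges n E"
    using double_matchingsD(2)[OF X] by (rule image_mono)
  then have M2: "reflect ` M2 \<subseteq> lower_edges n E" by simp
  with M1 show "M1 \<union> reflect ` M2 \<subseteq> E"
    unfolding upper_edges_def lower_edges_def by blast
  have M1_upper: "uncovered M1 v" if "v \<notin> upper_half n" for v
    using M1 that unfolding upper_edges_def uncovered_def by blast
  have M2_lower: "uncovered (reflect ` M2) v" if "v \<notin> lower_half n" for v
    using M2 that unfolding lower_edges_def uncovered_def by blast
  fix v assume v: "v \<in> grid_vertices n"
  consider "fst v < snd v" | "fst v = snd v" | "snd v < fst v" by linarith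
  then have "covered_once M1 v \<and> uncovered (reflect ` M2) v \<or>
      uncovered M1 v \<and> covered_once (reflect ` M2) v"
  proof cases
    case 1
    then have "v \<in> upper_half n - diagonal n" "v \<notin> lower_half n"
      using v unfolding upper_half_def lower_half_def diagonal_def by auto
    then show ?thesis
      using double_matchingsD(3)[OF X] M2_lower by simp
  next
    case 2
    then have "v \<in> diagonal n" "prod.swap v = v"
      using v unfolding diagonal_def by (auto simp: prod.swap_def prod_eq_iff)
    then show ?thesis
      using double_matchingsD(4)[OF X]
      by (simp add: covered_once_reflect_image uncovered_reflect_image)
  next
    case 3
    then have "prod.swap v \<in> upper_half n - diagonal n" "v \<notin> upper_half n"
      using v unfolding upper_half_def lower_half_def diagonal_def by auto
    then show ?thesis
      using double_matchingsD(3)[OF X] M1_upper by (simp add: covered_once_reflect_image)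
  qed
  then have "covered_once (M1 \<union> reflect ` M2) v"
    by (rule covered_once_Un)
  then show "\<exists>!e. e \<in> M1 \<union> reflect ` M2 \<and> v \<in> e"
    unfolding covered_once_def .
qed

lemma fold_unfold_matching:
  assumes E: "E \<subseteq> grid_edges n"
    and X: "(M1, M2) \<in>
      double_matchings (upper_half n) (diagonal n) (upper_edges n E) (reflect ` lower_edges n E)"
  shows "fold_matching n (M1 \<union> reflect ` M2) = (M1, M2)"
proof -
  have "reflect ` M2 \<subseteq> reflect ` reflect ` lower_edges n E"
    using double_matchingsD(2)[OF X] by (rule image_mono)
  then have M2_lower: "reflect ` M2 \<subseteq> lower_edges n E" by simp
  have M2: "e \<in> E \<and> e \<subseteq> lower_half n \<and> \<not> e \<subseteq> upper_half n" if "e \<in> reflect ` M2" for e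
  proof -
    have "e \<in> E" "e \<subseteq> lower_half n" using that M2_lower
      unfolding lower_edges_def by blast+
    then show ?thesis using E grid_edge_not_subset_both_halves[of e n] by blast
  qed
  have M1: "e \<in> E \<and> e \<subseteq> upper_half n \<and> \<not> e \<subseteq> lower_half n" if "e \<in> M1" for e
  proof -
    have "e \<in> E" "e \<subseteq> upper_half n" using that double_matchingsD(1)[OF X]
      unfolding upper_edges_def by blast+
    then show ?thesis using E grid_edge_not_subset_both_halves[of e n] by blast
  qed
  have "upper_edges n (M1 \<union> reflect ` M2) = M1" "lower_edges n (M1 \<union> reflect ` M2) = reflect ` M2"
    unfolding upper_edges_def lower_edges_def using M1 M2 by blast+
  then show ?thesis
    unfolding fold_matching_def by (simp add: image_image)
qed

lemma bij_betw_fold_matching: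
  assumes "E \<subseteq> grid_edges n"
  shows "bij_betw (fold_matching n) {M. perfect_matching (grid_vertices n) E M}
    (double_matchings (upper_half n) (diagonal n) (upper_edges n E) (reflect ` lower_edges n E))"
proof (rule bij_betw_byWitness[where f' = "\<lambda>(M1, M2). M1 \<union> reflect ` M2"])
  show "\<forall>M\<in>{M. perfect_matching (grid_vertices n) E M}.
      (\<lambda>(M1, M2). M1 \<union> reflect ` M2) (fold_matching n M) = M"
  proof
    fix M assume "M \<in> {M. perfect_matching (grid_vertices n) E M}"
    then have "M \<subseteq> grid_edges n" using assms unfolding perfect_matching_def by blast
    then show "(\<lambda>(M1, M2). M1 \<union> reflect ` M2) (fold_matching n M) = M"
      using upper_edges_Un_lower_edges unfolding fold_matching_def by (simp add: image_image)
  qed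
  show "\<forall>x\<in>double_matchings (upper_half n) (diagonal n) (upper_edges n E)
      (reflect ` lower_edges n E).
      fold_matching n ((\<lambda>(M1, M2). M1 \<union> reflect ` M2) x) = x"
    using fold_unfold_matching[OF assms] by auto
  show "fold_matching n ` {M. perfect_matching (grid_vertices n) E M} \<subseteq>
      double_matchings (upper_half n) (diagonal n) (upper_edges n E) (reflect ` lower_edges n E)"
    using fold_matching_mem_double_matchings[OF assms] by blast
  show "(\<lambda>(M1, M2). M1 \<union> reflect ` M2) `
      double_matchings (upper_half n) (diagonal n) (upper_edges n E) (reflect ` lower_edges n E) \<subseteq>
      {M. perfect_matching (grid_vertices n) E M}"
    using unfold_perfect_matching by auto
qed

lemma simple_graph_folded_edges:
  assumes "E \<subseteq> grid_edges n"
  shows "simple_graph (upper_half n) (upper_edges n E \<union> reflect ` lower_edges n E)"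
  unfolding simple_graph_def
proof
  fix e assume e: "e \<in> upper_edges n E \<union> reflect ` lower_edges n E"
  have "e \<in> grid_edges n \<and> e \<subseteq> upper_half n"
    using e
  proof
    assume "e \<in> reflect ` lower_edges n E"
    then obtain f where "f \<in> E" "f \<subseteq> lower_half n" "e = reflect f"
      unfolding lower_edges_def by blast
    then show ?thesis
      using assms reflect_mem_grid_edges reflect_subset_upper_half_iff by auto
  qed (use assms in \<open>auto simp: upper_edges_def\<close>)
  then have "e \<in> grid_edges n" "e \<subseteq> upper_half n" by blast+
  then obtain p q where "e = {p, q}" "grid_adjacent p q" "e \<subseteq> upper_half n"
    unfolding mem_grid_edges by blast
  moreover have "p \<noteq> q"
    using \<open>grid_adjacent p q\<close> unfolding grid_adjacent_def by auto
  ultimately show "\<exists>x y. e = {x, y} \<and> x \<noteq> y \<and> x \<in> upper_half n \<and> y \<in> upper_half n"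
    by blast
qed

lemma step_edge_not_subset_upper_half: "\<not> step_edge j \<subseteq> upper_half n"
  unfolding step_edge_def upper_half_def by auto

lemma folded_edges_agree_outside_deleted_steps:
  "edges_agree_outside ((\<lambda>j. (j, j)) ` K)
    (upper_edges n (grid_edges n - step_edge ` K))
    (reflect ` lower_edges n (grid_edges n - step_edge ` K))"
  unfolding edges_agree_outside_def
proof
  let ?E = "grid_edges n - step_edge ` K"
  fix e assume "e \<in> (upper_edges n ?E - reflect ` lower_edges n ?E) \<union>
    (reflect ` lower_edges n ?E - upper_edges n ?E)"
  then consider "e \<in> upper_edges n ?E" "e \<notin> reflect ` lower_edges n ?E"
    | "e \<in> reflect ` lower_edges n ?E" "e \<notin> upper_edges n ?E"
    by blast
  then show "e \<inter> (\<lambda>j. (j, j)) ` K \<noteq> {}"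
  proof cases
    case 1
    then have "reflect e \<in> grid_edges n" "reflect e \<subseteq> lower_half n" "reflect e \<notin> lower_edges n ?E"
      using reflect_mem_grid_edges reflect_subset_lower_half_iff
      by (auto simp: upper_edges_def) (metis image_eqI reflect_reflect)
    then obtain j where "j \<in> K" "reflect e = step_edge j"
      unfolding lower_edges_def by blast
    moreover have "(j, j) \<in> step_edge j"
      unfolding step_edge_def by simp
    ultimately have "(j, j) \<in> e" "j \<in> K"
      using mem_reflect_iff[of "(j, j)" e] by auto
    then show ?thesis by blast
  next
    case 2
    then obtain f where "f \<in> grid_edges n" "f \<subseteq> lower_half n" "e = reflect f"
      unfolding lower_edges_def by blast
    then have "e \<in> grid_edges n" "e \<subseteq> upper_half n"
      using reflect_mem_grid_edges reflect_subset_upper_half_iff by auto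
    with 2 have "e \<in> step_edge ` K"
      unfolding upper_edges_def by blast
    then show ?thesis
      using \<open>e \<subseteq> upper_half n\<close> step_edge_not_subset_upper_half by blast
  qed
qed

theorem proposition3p7:
  fixes r :: nat and K :: "nat set"
  assumes "r \<ge> 1" and "K \<subseteq> {0..<r}"
  shows "2 ^ (r - card K) dvd
    num_perfect_matchings (grid_vertices (2 * r)) (grid_edges (2 * r) - step_edge ` K)"
proof -
  let ?n = "2 * r" and ?E = "grid_edges (2 * r) - step_edge ` K" and ?C = "(\<lambda>j. (j, j)) ` K"
  have "?C \<subseteq> diagonal ?n"
    using assms(2) unfolding diagonal_def grid_vertices_def by auto
  then have "2 ^ (card (diagonal ?n) div 2 - card ?C) dvd
      card (double_matchings (upper_half ?n) (diagonal ?n)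
        (upper_edges ?n ?E) (reflect ` lower_edges ?n ?E))"
    using finite_upper_half simple_graph_folded_edges diagonal_subset_upper_half
      folded_edges_agree_outside_deleted_steps
    by (intro two_power_dvd_card_double_matchings) auto
  moreover have "card ?C = card K"
    by (simp add: card_image inj_on_def)
  moreover have "num_perfect_matchings (grid_vertices ?n) ?E =
      card (double_matchings (upper_half ?n) (diagonal ?n)
        (upper_edges ?n ?E) (reflect ` lower_edges ?n ?E))"
    unfolding num_perfect_matchings_def
    by (rule bij_betw_same_card[OF bij_betw_fold_matching]) blast
  ultimately show ?thesis
    by (simp add: card_diagonal)
qed

end
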